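(* Let $\lambda\in\mathbb{R}$, $a,b>0$ with $-b<\frac{\lambda}{2}<b$. (a) Let $\alpha,\beta>0$. If $X\sim\mathrm{K}(\lambda,a,b;1,\alpha^{-1})$ and $Y\sim\mathrm{K}(-\lambda,a,b;1,\beta^{-1})$ are independent and $(U,V)=\hat H_{II}^{\alpha,\beta}(X,Y)$, then $U,V$ are independent with $U\sim\mathrm{K}(-\lambda,a,b;1,\alpha^{-1})$ and $V\sim\mathrm{K}(\lambda,a,b;1,\beta^{-1})$. (b) If $X\sim\mathrm{K}^{(2)}(b+\frac{\lambda}{2},-\lambda,a)$ and $Y\sim\mathrm{Ga}(b-\frac{\lambda}{2},a)$ are independent and $(U,V)=F^+_{\mathrm{K\text{-}Ga},B}(X,Y)$, then $U,V$ are independent with $U\sim\mathrm{K}^{(2)}(b-\frac{\lambda}{2},\lambda,a)$ and $V\sim\mathrm{Ga}(b+\frac{\lambda}{2},a)$.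
   Context: $\mathbb{R}_+=(0,\infty)$. For $p,q>0$, $a>0$, $-b<\frac{\lambda}{2}$: $\mathrm{K}(\lambda,a,b;p,q)$ has density on $\mathbb{R}_+$ proportional to $x^{\lambda-1}e^{-apx}(1+qx^{-1})^{-b+\frac{\lambda}{2}}$. $\mathrm{K}^{(2)}(A,B,C)$ ($A,C>0$, $B\in\mathbb{R}$) has density proportional to $x^{A-1}(1+x)^{-A-B}e^{-Cx}$. $\mathrm{Ga}(A,C)$ ($A,C>0$) has density proportional to $x^{A-1}e^{-Cx}$. $\hat H_{II}^{\alpha,\beta}(x,y)=\left(\frac{y(1+\beta x+\beta y)}{1+\alpha x+\beta y},\ \frac{x(1+\alpha x+\alpha y)}{1+\alpha x+\beta y}\right)$ and $F^+_{\mathrm{K\text{-}Ga},B}(x,y)=\left(\frac{y}{1+x},\ \frac{x(1+x+y)}{1+x}\right)$, maps on $\mathbb{R}_+^2$. *)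

theory Defs
  imports "HOL-Probability.Probability"
begin

definition K_unnorm :: "real \<Rightarrow> real \<Rightarrow> real \<Rightarrow> real \<Rightarrow> real \<Rightarrow> real \<Rightarrow> real" where
  "K_unnorm l a b p q x = x powr (l - 1) * exp (- a * p * x) * (1 + q / x) powr (- b + l / 2)"

definition K_density :: "real \<Rightarrow> real \<Rightarrow> real \<Rightarrow> real \<Rightarrow> real \<Rightarrow> real \<Rightarrow> real" where
  "K_density l a b p q x =
     (if 0 < x then K_unnorm l a b p q x / (LINT t:{0<..}|lborel. K_unnorm l a b p q t) else 0)"

definition K2_unnorm :: "real \<Rightarrow> real \<Rightarrow> real \<Rightarrow> real \<Rightarrow> real" where
  "K2_unnorm A B C x = x powr (A - 1) * (1 + x) powr (- A - B) * exp (- C * x)"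

definition K2_density :: "real \<Rightarrow> real \<Rightarrow> real \<Rightarrow> real \<Rightarrow> real" where
  "K2_density A B C x =
     (if 0 < x then K2_unnorm A B C x / (LINT t:{0<..}|lborel. K2_unnorm A B C t) else 0)"

definition Ga_unnorm :: "real \<Rightarrow> real \<Rightarrow> real \<Rightarrow> real" where
  "Ga_unnorm A C x = x powr (A - 1) * exp (- C * x)"

definition Ga_density :: "real \<Rightarrow> real \<Rightarrow> real \<Rightarrow> real" where
  "Ga_density A C x =
     (if 0 < x then Ga_unnorm A C x / (LINT t:{0<..}|lborel. Ga_unnorm A C t) else 0)"

definition H_II :: "real \<Rightarrow> real \<Rightarrow> real \<times> real \<Rightarrow> real \<times> real" where
  "H_II \<alpha> \<beta> xy = (case xy of (x, y) \<Rightarrow>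
     (y * (1 + \<beta> * x + \<beta> * y) / (1 + \<alpha> * x + \<beta> * y),
      x * (1 + \<alpha> * x + \<alpha> * y) / (1 + \<alpha> * x + \<beta> * y)))"

definition F_KGa_B :: "real \<times> real \<Rightarrow> real \<times> real" where
  "F_KGa_B xy = (case xy of (x, y) \<Rightarrow> (y / (1 + x), x * (1 + x + y) / (1 + x)))"

end

theory Submission
  imports Defs
begin

text \<open>
  For \<open>\<alpha> > 0\<close>, \<open>\<beta> \<ge> 0\<close> the map \<open>H_II \<alpha> \<beta>\<close> is a bijection of the open quadrant with explicit
  inverse \<open>H_II_inv \<alpha> \<beta>\<close> and Jacobian \<open>H_II_jacobian \<alpha> \<beta>\<close>, and \<open>F_KGa_B = H_II 1 0\<close>.
  By the change-of-variables formula, \<open>H_II \<alpha> \<beta> (X, Y)\<close> has the density obtained by evaluating the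
  product density of \<open>(X, Y)\<close> at \<open>H_II_inv \<alpha> \<beta> (u, v)\<close> and multiplying by the Jacobian. For the
  densities of the theorem this is, by an elementary identity between powers, a constant multiple of
  the product of the claimed output densities. A joint density that factorises makes the coordinates
  independent with the factors as marginals, and the constant is absorbed by the normalisations.
\<close>

section \<open>The inverse of \<open>H_II\<close> and the change of variables\<close>

definition H_II_inv :: "real \<Rightarrow> real \<Rightarrow> real \<times> real \<Rightarrow> real \<times> real" where
  "H_II_inv \<alpha> \<beta> uv = (case uv of (u, v) \<Rightarrow>
     (v * (1 + \<beta> * (u + v)) / (1 + \<alpha> * u + \<beta> * v), u * (1 + \<alpha> * (u + v)) / (1 + \<alpha> * u + \<beta> * v)))"

definition H_II_jacobian :: "real \<Rightarrow> real \<Rightarrow> real \<Rightarrow> real \<Rightarrow> real" where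
  "H_II_jacobian \<alpha> \<beta> u v = (1 + \<alpha> * (u + v)) * (1 + \<beta> * (u + v)) / (1 + \<alpha> * u + \<beta> * v)^2"

lemma H_II_H_II_inv:
  fixes \<alpha> \<beta> u v :: real
  assumes "0 < \<alpha>" "0 \<le> \<beta>" "0 < u" "0 < v"
  shows "H_II \<alpha> \<beta> (H_II_inv \<alpha> \<beta> (u, v)) = (u, v)"
proof -
  define A B D where "A = 1 + \<alpha> * (u + v)" and "B = 1 + \<beta> * (u + v)" and "D = 1 + \<alpha> * u + \<beta> * v"
  define x y where "x = v * B / D" and "y = u * A / D"
  have "0 < \<alpha> * u" "0 \<le> \<beta> * v" "0 < \<alpha> * (u + v)" "0 \<le> \<beta> * (u + v)"
    using assms by simp_all
  then have pos: "0 < A" "0 < B" "0 < D"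
    unfolding A_def B_def D_def by linarith+
  have "v * B + u * A = (u + v) * D"
    by (simp add: A_def B_def D_def algebra_simps)
  then have "x + y = u + v"
    using pos by (simp add: x_def y_def flip: add_divide_distrib)
  then have sums: "1 + \<beta> * x + \<beta> * y = B" "1 + \<alpha> * x + \<alpha> * y = A"
    unfolding A_def B_def by (simp_all flip: distrib_left add.assoc)
  have "D + \<alpha> * (v * B) + \<beta> * (u * A) = A * B"
    by (simp add: A_def B_def D_def algebra_simps)
  then have den: "1 + \<alpha> * x + \<beta> * y = A * B / D"
    using pos by (simp add: x_def y_def field_simps)
  have "H_II_inv \<alpha> \<beta> (u, v) = (x, y)"
    by (simp add: H_II_inv_def x_def y_def A_def B_def D_def)
  then show ?thesis
    using pos by (simp add: H_II_def sums den) (simp add: x_def y_def field_simps)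
qed

lemma measurable_H_II [measurable]: "H_II \<alpha> \<beta> \<in> measurable (lborel \<Otimes>\<^sub>M lborel) (lborel \<Otimes>\<^sub>M lborel)"
proof -
  have "H_II \<alpha> \<beta> = (\<lambda>z. (snd z * (1 + \<beta> * fst z + \<beta> * snd z) / (1 + \<alpha> * fst z + \<beta> * snd z),
      fst z * (1 + \<alpha> * fst z + \<alpha> * snd z) / (1 + \<alpha> * fst z + \<beta> * snd z)))"
    by (auto simp: H_II_def split: prod.split)
  then show ?thesis by simp
qed

lemma F_KGa_B_eq_H_II: "F_KGa_B = H_II 1 0"
  by (auto simp: F_KGa_B_def H_II_def split: prod.split)

text \<open>\<open>H_II \<alpha> \<beta>\<close> preserves \<open>x + y\<close>. On the line \<open>x + y = s\<close> its inverse is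
  \<open>u \<mapsto> (s - fibre_map \<alpha> \<beta> s u, fibre_map \<alpha> \<beta> s u)\<close>, and \<open>fibre_map \<alpha> \<beta> s\<close> is a Moebius map of
  \<open>(0, s)\<close> onto itself. Shearing to \<open>(x + y, y)\<close> thus reduces the planar change of variables to
  one-dimensional substitutions.\<close>

definition fibre_map :: "real \<Rightarrow> real \<Rightarrow> real \<Rightarrow> real \<Rightarrow> real" where
  "fibre_map \<alpha> \<beta> s u = u * (1 + \<alpha> * s) / (1 + \<beta> * s - (\<beta> - \<alpha>) * u)"

definition fibre_map_deriv :: "real \<Rightarrow> real \<Rightarrow> real \<Rightarrow> real \<Rightarrow> real" where
  "fibre_map_deriv \<alpha> \<beta> s u = (1 + \<alpha> * s) * (1 + \<beta> * s) / (1 + \<beta> * s - (\<beta> - \<alpha>) * u)^2"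

lemma measurable_fibre_map [measurable]:
  assumes [measurable]: "f \<in> borel_measurable M" "g \<in> borel_measurable M"
  shows "(\<lambda>z. fibre_map \<alpha> \<beta> (f z) (g z)) \<in> borel_measurable M"
  unfolding fibre_map_def by measurable

lemma measurable_fibre_map_deriv [measurable]:
  assumes [measurable]: "f \<in> borel_measurable M" "g \<in> borel_measurable M"
  shows "(\<lambda>z. fibre_map_deriv \<alpha> \<beta> (f z) (g z)) \<in> borel_measurable M"
  unfolding fibre_map_deriv_def by measurable

lemma fibre_map_denom_pos:
  fixes \<alpha> \<beta> s u :: real
  assumes "0 < \<alpha>" "0 \<le> \<beta>" "0 \<le> u" "u \<le> s"
  shows "0 < 1 + \<beta> * s - (\<beta> - \<alpha>) * u"
proof -
  have "1 + \<beta> * s - (\<beta> - \<alpha>) * u = 1 + \<beta> * (s - u) + \<alpha> * u"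
    by (simp add: algebra_simps)
  moreover have "0 \<le> \<beta> * (s - u)" "0 \<le> \<alpha> * u"
    using assms by auto
  ultimately show ?thesis by linarith
qed

lemma fibre_map_mem_interval_iff:
  fixes \<alpha> \<beta> s u :: real
  assumes "0 < \<alpha>" "0 \<le> \<beta>" "0 \<le> u" "u \<le> s"
  shows "fibre_map \<alpha> \<beta> s u \<in> {0<..<s} \<longleftrightarrow> u \<in> {0<..<s}"
proof -
  define d where "d = 1 + \<beta> * s - (\<beta> - \<alpha>) * u"
  have d: "0 < d" using fibre_map_denom_pos[OF assms] by (simp add: d_def)
  have s: "0 \<le> s" using assms by simp
  have \<psi>: "fibre_map \<alpha> \<beta> s u = u * (1 + \<alpha> * s) / d"
    by (simp add: fibre_map_def d_def)
  have "0 < fibre_map \<alpha> \<beta> s u \<longleftrightarrow> 0 < u"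
    using d assms s by (simp add: \<psi> zero_less_divide_iff zero_less_mult_iff add_pos_nonneg)
  moreover have "fibre_map \<alpha> \<beta> s u < s \<longleftrightarrow> u * (1 + \<alpha> * s) < s * d"
    using d by (simp add: \<psi> pos_divide_less_eq)
  moreover have "s * d - u * (1 + \<alpha> * s) = (s - u) * (1 + \<beta> * s)"
    by (simp add: d_def algebra_simps)
  moreover have "0 < (s - u) * (1 + \<beta> * s) \<longleftrightarrow> u < s"
    using assms s by (simp add: zero_less_mult_iff add_pos_nonneg)
  ultimately show ?thesis
    unfolding greaterThanLessThan_iff by linarith
qed

lemma fibre_map_has_derivative:
  fixes \<alpha> \<beta> s u :: real
  assumes "0 < \<alpha>" "0 \<le> \<beta>" "0 \<le> u" "u \<le> s"
  shows "(fibre_map \<alpha> \<beta> s has_real_derivative fibre_map_deriv \<alpha> \<beta> s u) (at u)"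
proof -
  have d: "1 + \<beta> * s - (\<beta> - \<alpha>) * u \<noteq> 0"
    using fibre_map_denom_pos[OF assms] by simp
  show ?thesis
    unfolding fibre_map_def[abs_def] fibre_map_deriv_def
    apply (rule derivative_eq_intros refl)+
    using d apply (simp_all add: divide_simps power2_eq_square)
    apply (simp add: algebra_simps)
    done
qed

lemma nn_integral_fibre_map_subst:
  fixes G :: "real \<Rightarrow> real"
  assumes "0 < \<alpha>" "0 \<le> \<beta>" "0 < s" and [measurable]: "G \<in> borel_measurable borel"
  shows "(\<integral>\<^sup>+y. ennreal (G y * indicator {0<..<s} y) \<partial>lborel)
       = (\<integral>\<^sup>+u. ennreal (G (fibre_map \<alpha> \<beta> s u) * fibre_map_deriv \<alpha> \<beta> s u * indicator {0<..<s} u) \<partial>lborel)"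
proof -
  let ?\<psi> = "fibre_map \<alpha> \<beta> s" and ?f = "\<lambda>y. G y * indicator {0<..<s} y"
  have "0 < 1 + \<alpha> * s"
    using assms by (simp add: add_pos_pos)
  then have ends: "?\<psi> 0 = 0" "?\<psi> s = s"
    by (simp_all add: fibre_map_def left_diff_distrib)
  have "(\<integral>\<^sup>+y. ennreal (?f y) \<partial>lborel) = (\<integral>\<^sup>+y. ennreal (?f y * indicator {?\<psi> 0..?\<psi> s} y) \<partial>lborel)"
    by (intro nn_integral_cong) (auto simp: ends split: split_indicator)
  also have "\<dots> = (\<integral>\<^sup>+u. ennreal (?f (?\<psi> u) * fibre_map_deriv \<alpha> \<beta> s u * indicator {0..s} u) \<partial>lborel)"
  proof (rule nn_integral_substitution)
    show "set_borel_measurable borel {?\<psi> 0..?\<psi> s} ?f"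
      unfolding set_borel_measurable_def by measurable
    show "(?\<psi> has_real_derivative fibre_map_deriv \<alpha> \<beta> s u) (at u)" if "u \<in> {0..s}" for u
      using fibre_map_has_derivative assms that by auto
    have "\<forall>u\<in>{0..s}. 1 + \<beta> * s - (\<beta> - \<alpha>) * u \<noteq> 0"
      using fibre_map_denom_pos[OF assms(1,2)] by force
    then show "continuous_on {0..s} (fibre_map_deriv \<alpha> \<beta> s)"
      unfolding fibre_map_deriv_def by (intro continuous_intros) auto
    show "0 \<le> fibre_map_deriv \<alpha> \<beta> s u" if "u \<in> {0..s}" for u
      unfolding fibre_map_deriv_def using assms by (auto intro!: divide_nonneg_pos)
  qed (use assms in simp)
  also have "\<dots> = (\<integral>\<^sup>+u. ennreal (G (?\<psi> u) * fibre_map_deriv \<alpha> \<beta> s u * indicator {0<..<s} u) \<partial>lborel)"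
  proof (intro nn_integral_cong)
    fix u :: real
    show "ennreal (?f (?\<psi> u) * fibre_map_deriv \<alpha> \<beta> s u * indicator {0..s} u)
        = ennreal (G (?\<psi> u) * fibre_map_deriv \<alpha> \<beta> s u * indicator {0<..<s} u)"
      using fibre_map_mem_interval_iff[OF assms(1,2), of u s]
      by (cases "0 \<le> u \<and> u \<le> s") (auto split: split_indicator)
  qed
  finally show ?thesis .
qed

lemma nn_integral_quadrant_shear:
  fixes F :: "real \<times> real \<Rightarrow> real"
  assumes [measurable]: "F \<in> borel_measurable (lborel \<Otimes>\<^sub>M lborel)"
  shows "(\<integral>\<^sup>+x. \<integral>\<^sup>+y. ennreal (F (x, y) * indicator {0<..} x * indicator {0<..} y) \<partial>lborel \<partial>lborel)
       = (\<integral>\<^sup>+s. \<integral>\<^sup>+y. ennreal (F (s - y, y) * indicator {0<..<s} y) \<partial>lborel \<partial>lborel)"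
proof -
  have "(\<integral>\<^sup>+x. \<integral>\<^sup>+y. ennreal (F (x, y) * indicator {0<..} x * indicator {0<..} y) \<partial>lborel \<partial>lborel)
      = (\<integral>\<^sup>+y. \<integral>\<^sup>+x. ennreal (F (x, y) * indicator {0<..} x * indicator {0<..} y) \<partial>lborel \<partial>lborel)"
    by (rule lborel_pair.Fubini'[symmetric]) measurable
  also have "\<dots> = (\<integral>\<^sup>+y. \<integral>\<^sup>+s. ennreal (F (s - y, y) * indicator {0<..} (s - y) * indicator {0<..} y) \<partial>lborel \<partial>lborel)"
  proof (rule nn_integral_cong)
    fix y :: real
    have "(\<lambda>x. ennreal (F (x, y) * indicator {0<..} x * indicator {0<..} y)) \<in> borel_measurable borel"
      by measurable
    from nn_integral_real_affine[OF this, where c = 1 and t = "- y"]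
    show "(\<integral>\<^sup>+x. ennreal (F (x, y) * indicator {0<..} x * indicator {0<..} y) \<partial>lborel)
        = (\<integral>\<^sup>+s. ennreal (F (s - y, y) * indicator {0<..} (s - y) * indicator {0<..} y) \<partial>lborel)"
      by simp
  qed
  also have "\<dots> = (\<integral>\<^sup>+s. \<integral>\<^sup>+y. ennreal (F (s - y, y) * indicator {0<..} (s - y) * indicator {0<..} y) \<partial>lborel \<partial>lborel)"
    by (rule lborel_pair.Fubini') measurable
  also have "\<dots> = (\<integral>\<^sup>+s. \<integral>\<^sup>+y. ennreal (F (s - y, y) * indicator {0<..<s} y) \<partial>lborel \<partial>lborel)"
    by (intro nn_integral_cong) (auto split: split_indicator)
  finally show ?thesis .
qed

lemma H_II_inv_eq_fibre_map:
  fixes \<alpha> \<beta> u v :: real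
  assumes "0 < \<alpha>" "0 \<le> \<beta>" "0 < u" "0 < v"
  shows "H_II_inv \<alpha> \<beta> (u, v) = (u + v - fibre_map \<alpha> \<beta> (u + v) u, fibre_map \<alpha> \<beta> (u + v) u)"
    and "fibre_map_deriv \<alpha> \<beta> (u + v) u = H_II_jacobian \<alpha> \<beta> u v"
proof -
  have den: "1 + \<beta> * (u + v) - (\<beta> - \<alpha>) * u = 1 + \<alpha> * u + \<beta> * v"
    by (simp add: algebra_simps)
  have "0 < \<alpha> * u" "0 \<le> \<beta> * v"
    using assms by simp_all
  then have "0 < 1 + \<alpha> * u + \<beta> * v" by linarith
  then show "H_II_inv \<alpha> \<beta> (u, v) = (u + v - fibre_map \<alpha> \<beta> (u + v) u, fibre_map \<alpha> \<beta> (u + v) u)"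
    by (simp add: H_II_inv_def fibre_map_def den field_simps)
  show "fibre_map_deriv \<alpha> \<beta> (u + v) u = H_II_jacobian \<alpha> \<beta> u v"
    by (simp add: fibre_map_deriv_def H_II_jacobian_def den)
qed

lemma nn_integral_quadrant_H_II_inv:
  fixes G :: "real \<times> real \<Rightarrow> real"
  assumes \<alpha>: "0 < \<alpha>" and \<beta>: "0 \<le> \<beta>" and [measurable]: "G \<in> borel_measurable (lborel \<Otimes>\<^sub>M lborel)"
  shows "(\<integral>\<^sup>+x. \<integral>\<^sup>+y. ennreal (G (x, y) * indicator {0<..} x * indicator {0<..} y) \<partial>lborel \<partial>lborel)
       = (\<integral>\<^sup>+u. \<integral>\<^sup>+v. ennreal (G (H_II_inv \<alpha> \<beta> (u, v)) * H_II_jacobian \<alpha> \<beta> u v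
                                  * indicator {0<..} u * indicator {0<..} v) \<partial>lborel \<partial>lborel)"
proof -
  let ?\<psi> = "fibre_map \<alpha> \<beta>" and ?\<psi>' = "fibre_map_deriv \<alpha> \<beta>"
  define F where "F z = G (fst z + snd z - ?\<psi> (fst z + snd z) (snd z), ?\<psi> (fst z + snd z) (snd z))
                        * ?\<psi>' (fst z + snd z) (snd z)" for z
  have [measurable]: "F \<in> borel_measurable (lborel \<Otimes>\<^sub>M lborel)"
    unfolding F_def by measurable
  have "(\<integral>\<^sup>+x. \<integral>\<^sup>+y. ennreal (G (x, y) * indicator {0<..} x * indicator {0<..} y) \<partial>lborel \<partial>lborel)
      = (\<integral>\<^sup>+s. \<integral>\<^sup>+y. ennreal (G (s - y, y) * indicator {0<..<s} y) \<partial>lborel \<partial>lborel)"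
    by (rule nn_integral_quadrant_shear) measurable
  also have "\<dots> = (\<integral>\<^sup>+s. \<integral>\<^sup>+y. ennreal (F (s - y, y) * indicator {0<..<s} y) \<partial>lborel \<partial>lborel)"
  proof (rule nn_integral_cong)
    fix s :: real
    show "(\<integral>\<^sup>+y. ennreal (G (s - y, y) * indicator {0<..<s} y) \<partial>lborel)
        = (\<integral>\<^sup>+y. ennreal (F (s - y, y) * indicator {0<..<s} y) \<partial>lborel)"
    proof (cases "0 < s")
      case True
      have "(\<lambda>y. G (s - y, y)) \<in> borel_measurable borel" by measurable
      from nn_integral_fibre_map_subst[OF \<alpha> \<beta> True this] show ?thesis
        by (simp add: F_def)
    qed (simp add: indicator_def)
  qed
  also have "\<dots> = (\<integral>\<^sup>+x. \<integral>\<^sup>+y. ennreal (F (x, y) * indicator {0<..} x * indicator {0<..} y) \<partial>lborel \<partial>lborel)"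
    by (rule nn_integral_quadrant_shear[symmetric]) measurable
  also have "\<dots> = (\<integral>\<^sup>+y. \<integral>\<^sup>+x. ennreal (F (x, y) * indicator {0<..} x * indicator {0<..} y) \<partial>lborel \<partial>lborel)"
    by (rule lborel_pair.Fubini') measurable
  also have "\<dots> = (\<integral>\<^sup>+u. \<integral>\<^sup>+v. ennreal (G (H_II_inv \<alpha> \<beta> (u, v)) * H_II_jacobian \<alpha> \<beta> u v
                                  * indicator {0<..} u * indicator {0<..} v) \<partial>lborel \<partial>lborel)"
  proof (intro nn_integral_cong)
    fix u v :: real
    show "ennreal (F (v, u) * indicator {0<..} v * indicator {0<..} u)
        = ennreal (G (H_II_inv \<alpha> \<beta> (u, v)) * H_II_jacobian \<alpha> \<beta> u v * indicator {0<..} u * indicator {0<..} v)"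
      using H_II_inv_eq_fibre_map[OF \<alpha> \<beta>, of u v]
      by (cases "0 < u \<and> 0 < v") (auto simp: F_def add.commute indicator_def)
  qed
  finally show ?thesis .
qed

section \<open>Normalised densities on the half-line\<close>

definition restrict_pos :: "(real \<Rightarrow> real) \<Rightarrow> real \<Rightarrow> real" where
  "restrict_pos f x = (if 0 < x then f x else 0)"

text \<open>If \<open>k\<close> is not integrable, its Bochner integral is \<open>0\<close> and so is \<open>normalise k\<close>.\<close>
definition normalise :: "(real \<Rightarrow> real) \<Rightarrow> real \<Rightarrow> real" where
  "normalise k x = k x / integral\<^sup>L lborel k"

lemma normalise_restrict_pos_eq:
  "normalise (restrict_pos f) x = (if 0 < x then f x / (LINT t:{0<..}|lborel. f t) else 0)"
proof -
  have "(LINT t:{0<..}|lborel. f t) = integral\<^sup>L lborel (restrict_pos f)"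
    unfolding set_lebesgue_integral_def
    by (rule Bochner_Integration.integral_cong) (auto simp: restrict_pos_def)
  then show ?thesis
    by (simp add: normalise_def restrict_pos_def)
qed

lemma K_density_eq_normalise: "K_density l a b p q = normalise (restrict_pos (K_unnorm l a b p q))"
  by (simp add: fun_eq_iff K_density_def normalise_restrict_pos_eq)

lemma K2_density_eq_normalise: "K2_density A B C = normalise (restrict_pos (K2_unnorm A B C))"
  by (simp add: fun_eq_iff K2_density_def normalise_restrict_pos_eq)

lemma Ga_density_eq_normalise: "Ga_density A C = normalise (restrict_pos (Ga_unnorm A C))"
  by (simp add: fun_eq_iff Ga_density_def normalise_restrict_pos_eq)

lemma measurable_restrict_pos [measurable]:
  assumes [measurable]: "f \<in> borel_measurable borel"
  shows "restrict_pos f \<in> borel_measurable borel"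
  unfolding restrict_pos_def[abs_def] by measurable

lemma restrict_pos_nonneg: "(\<And>x. 0 < x \<Longrightarrow> 0 < f x) \<Longrightarrow> 0 \<le> restrict_pos f x"
  by (simp add: restrict_pos_def less_imp_le)

lemma nn_integral_restrict_pos_neq_0:
  assumes [measurable]: "f \<in> borel_measurable borel" and pos: "\<And>x. 0 < x \<Longrightarrow> 0 < f x"
  shows "(\<integral>\<^sup>+x. ennreal (restrict_pos f x) \<partial>lborel) \<noteq> 0"
proof
  assume "(\<integral>\<^sup>+x. ennreal (restrict_pos f x) \<partial>lborel) = 0"
  then have "AE x in lborel. ennreal (restrict_pos f x) = 0"
    by (subst (asm) nn_integral_0_iff_AE) measurable
  then have "AE x in lborel. x \<notin> {0<..<1::real}"
    by (rule AE_mp) (auto intro!: AE_I2 dest: pos simp: restrict_pos_def)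
  then have "emeasure lborel {0<..<1::real} = 0"
    by (subst (asm) AE_iff_measurable[where N = "{0<..<1}"]) auto
  then show False by simp
qed

lemma measurable_normalise [measurable]:
  assumes [measurable]: "k \<in> borel_measurable borel"
  shows "normalise k \<in> borel_measurable borel"
  unfolding normalise_def[abs_def] by measurable

lemma normalise_nonneg: "(\<And>x. 0 \<le> k x) \<Longrightarrow> 0 \<le> normalise k x"
  by (simp add: normalise_def integral_nonneg)

lemma nn_integral_normalise_eq_1:
  assumes nonneg: "\<And>x. 0 \<le> k x" and [measurable]: "k \<in> borel_measurable borel"
    and mass: "(\<integral>\<^sup>+x. ennreal (k x) \<partial>lborel) = ennreal Z" and Z: "0 < Z"
  shows "(\<integral>\<^sup>+x. ennreal (normalise k x) \<partial>lborel) = 1"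
proof -
  have "integral\<^sup>L lborel k = Z"
    using nn_integral_eq_integrable[of k lborel Z] nonneg mass Z by simp
  then have "(\<integral>\<^sup>+x. ennreal (normalise k x) \<partial>lborel) = (\<integral>\<^sup>+x. ennreal (1 / Z) * ennreal (k x) \<partial>lborel)"
    using nonneg Z by (intro nn_integral_cong) (simp add: normalise_def flip: ennreal_mult)
  also have "\<dots> = ennreal (1 / Z) * ennreal Z"
    by (simp add: nn_integral_cmult mass)
  also have "\<dots> = 1"
    using Z by (simp flip: ennreal_mult)
  finally show ?thesis .
qed

lemma nn_integral_eq_integral_of_normalise:
  assumes nonneg: "\<And>x. 0 \<le> k x" and [measurable]: "k \<in> borel_measurable borel"
    and mass: "(\<integral>\<^sup>+x. ennreal (normalise k x) \<partial>lborel) = 1"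
  shows "0 < integral\<^sup>L lborel k" "(\<integral>\<^sup>+x. ennreal (k x) \<partial>lborel) = ennreal (integral\<^sup>L lborel k)"
proof -
  show pos: "0 < integral\<^sup>L lborel k"
  proof (rule ccontr)
    assume "\<not> 0 < integral\<^sup>L lborel k"
    then have "ennreal (normalise k x) = 0" for x
      using nonneg by (simp add: normalise_def divide_nonneg_nonpos ennreal_neg)
    with mass show False by simp
  qed
  have "(\<integral>\<^sup>+x. ennreal (k x) \<partial>lborel) = (\<integral>\<^sup>+x. ennreal (integral\<^sup>L lborel k) * ennreal (normalise k x) \<partial>lborel)"
    using pos nonneg by (intro nn_integral_cong) (simp add: normalise_def flip: ennreal_mult)
  also have "\<dots> = ennreal (integral\<^sup>L lborel k)"
    by (simp add: nn_integral_cmult measurable_normalise mass)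
  finally show "(\<integral>\<^sup>+x. ennreal (k x) \<partial>lborel) = ennreal (integral\<^sup>L lborel k)" .
qed

lemma nn_integral_iterated_cmult:
  fixes F :: "real \<Rightarrow> real \<Rightarrow> real"
  assumes c: "0 \<le> c" and nonneg: "\<And>x y. 0 \<le> F x y"
    and [measurable]: "(\<lambda>(x, y). F x y) \<in> borel_measurable (lborel \<Otimes>\<^sub>M lborel)"
  shows "(\<integral>\<^sup>+x. \<integral>\<^sup>+y. ennreal (c * F x y) \<partial>lborel \<partial>lborel) = ennreal c * (\<integral>\<^sup>+x. \<integral>\<^sup>+y. ennreal (F x y) \<partial>lborel \<partial>lborel)"
proof -
  have "(\<integral>\<^sup>+x. \<integral>\<^sup>+y. ennreal (c * F x y) \<partial>lborel \<partial>lborel)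
      = (\<integral>\<^sup>+x. ennreal c * (\<integral>\<^sup>+y. ennreal (F x y) \<partial>lborel) \<partial>lborel)"
    using c nonneg by (intro nn_integral_cong) (simp add: ennreal_mult nn_integral_cmult)
  also have "\<dots> = ennreal c * (\<integral>\<^sup>+x. \<integral>\<^sup>+y. ennreal (F x y) \<partial>lborel \<partial>lborel)"
    by (simp add: nn_integral_cmult)
  finally show ?thesis .
qed

lemma nn_integral_iterated_normalise:
  fixes W :: "real \<times> real \<Rightarrow> real" and kX kY :: "real \<Rightarrow> real"
  assumes nonneg: "\<And>z. 0 \<le> W z" "\<And>x. 0 \<le> kX x" "\<And>y. 0 \<le> kY y"
    and [measurable]: "W \<in> borel_measurable (lborel \<Otimes>\<^sub>M lborel)"
      "kX \<in> borel_measurable borel" "kY \<in> borel_measurable borel"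
  shows "(\<integral>\<^sup>+x. \<integral>\<^sup>+y. ennreal (W (x, y) * normalise kX x * normalise kY y) \<partial>lborel \<partial>lborel)
       = ennreal (1 / (integral\<^sup>L lborel kX * integral\<^sup>L lborel kY))
         * (\<integral>\<^sup>+x. \<integral>\<^sup>+y. ennreal (W (x, y) * kX x * kY y) \<partial>lborel \<partial>lborel)"
proof -
  have "W (x, y) * normalise kX x * normalise kY y
      = 1 / (integral\<^sup>L lborel kX * integral\<^sup>L lborel kY) * (W (x, y) * kX x * kY y)" for x y
    by (simp add: normalise_def)
  then have "(\<integral>\<^sup>+x. \<integral>\<^sup>+y. ennreal (W (x, y) * normalise kX x * normalise kY y) \<partial>lborel \<partial>lborel)
      = (\<integral>\<^sup>+x. \<integral>\<^sup>+y. ennreal (1 / (integral\<^sup>L lborel kX * integral\<^sup>L lborel kY)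
                                  * (W (x, y) * kX x * kY y)) \<partial>lborel \<partial>lborel)"
    by (simp only:)
  also have "\<dots> = ennreal (1 / (integral\<^sup>L lborel kX * integral\<^sup>L lborel kY))
      * (\<integral>\<^sup>+x. \<integral>\<^sup>+y. ennreal (W (x, y) * kX x * kY y) \<partial>lborel \<partial>lborel)"
    by (rule nn_integral_iterated_cmult) (simp add: nonneg integral_nonneg, simp add: nonneg, measurable)
  finally show ?thesis .
qed

lemma normalise_transfer:
  fixes kX kY kU kV :: "real \<Rightarrow> real" and T :: "real \<times> real \<Rightarrow> real \<times> real" and C :: real
  assumes nonneg: "\<And>x. 0 \<le> kX x" "\<And>x. 0 \<le> kY x" "\<And>x. 0 \<le> kU x" "\<And>x. 0 \<le> kV x"
    and [measurable]: "kX \<in> borel_measurable borel" "kY \<in> borel_measurable borel"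
      "kU \<in> borel_measurable borel" "kV \<in> borel_measurable borel"
      "T \<in> measurable (lborel \<Otimes>\<^sub>M lborel) (lborel \<Otimes>\<^sub>M lborel)"
    and C: "0 < C"
    and mass: "(\<integral>\<^sup>+x. ennreal (normalise kX x) \<partial>lborel) = 1" "(\<integral>\<^sup>+x. ennreal (normalise kY x) \<partial>lborel) = 1"
    and nonzero: "(\<integral>\<^sup>+x. ennreal (kU x) \<partial>lborel) \<noteq> 0" "(\<integral>\<^sup>+x. ennreal (kV x) \<partial>lborel) \<noteq> 0"
    and transform: "\<forall>A \<in> sets (lborel \<Otimes>\<^sub>M lborel).
      (\<integral>\<^sup>+x. \<integral>\<^sup>+y. ennreal (indicator A (T (x, y)) * kX x * kY y) \<partial>lborel \<partial>lborel)
      = ennreal C * (\<integral>\<^sup>+u. \<integral>\<^sup>+v. ennreal (indicator A (u, v) * kU u * kV v) \<partial>lborel \<partial>lborel)"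
  shows "(\<integral>\<^sup>+x. ennreal (normalise kU x) \<partial>lborel) = 1" "(\<integral>\<^sup>+x. ennreal (normalise kV x) \<partial>lborel) = 1"
    and "\<And>A. A \<in> sets (lborel \<Otimes>\<^sub>M lborel) \<Longrightarrow>
      (\<integral>\<^sup>+x. \<integral>\<^sup>+y. ennreal (indicator A (T (x, y)) * normalise kX x * normalise kY y) \<partial>lborel \<partial>lborel)
      = (\<integral>\<^sup>+u. \<integral>\<^sup>+v. ennreal (indicator A (u, v) * normalise kU u * normalise kV v) \<partial>lborel \<partial>lborel)"
proof -
  define ZX ZY where "ZX = integral\<^sup>L lborel kX" and "ZY = integral\<^sup>L lborel kY"
  note X = nn_integral_eq_integral_of_normalise[OF nonneg(1) _ mass(1), folded ZX_def]
  note Y = nn_integral_eq_integral_of_normalise[OF nonneg(2) _ mass(2), folded ZY_def]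
  have "UNIV \<in> sets (lborel \<Otimes>\<^sub>M lborel)"
    using sets.top[of "lborel \<Otimes>\<^sub>M lborel"] by (simp add: space_pair_measure)
  from transform[rule_format, OF this]
  have "ennreal C * ((\<integral>\<^sup>+x. ennreal (kU x) \<partial>lborel) * (\<integral>\<^sup>+x. ennreal (kV x) \<partial>lborel)) = ennreal (ZX * ZY)"
    using X Y by (simp add: nonneg nn_integral_cmult nn_integral_multc ennreal_mult)
  moreover from this have "(\<integral>\<^sup>+x. ennreal (kU x) \<partial>lborel) \<noteq> \<top>" "(\<integral>\<^sup>+x. ennreal (kV x) \<partial>lborel) \<noteq> \<top>"
    using C nonzero by (auto simp: ennreal_mult_eq_top_iff)
  then obtain ZU ZV where U: "(\<integral>\<^sup>+x. ennreal (kU x) \<partial>lborel) = ennreal ZU" "0 \<le> ZU"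
    and V: "(\<integral>\<^sup>+x. ennreal (kV x) \<partial>lborel) = ennreal ZV" "0 \<le> ZV"
    by (metis ennreal_cases)
  ultimately have constants: "C * (ZU * ZV) = ZX * ZY"
    using C X Y by (simp flip: ennreal_mult)
  have ZU: "0 < ZU" "integral\<^sup>L lborel kU = ZU"
    using U nonzero nonneg nn_integral_eq_integrable[of kU lborel ZU] by (auto simp: less_le)
  have ZV: "0 < ZV" "integral\<^sup>L lborel kV = ZV"
    using V nonzero nonneg nn_integral_eq_integrable[of kV lborel ZV] by (auto simp: less_le)
  show "(\<integral>\<^sup>+x. ennreal (normalise kU x) \<partial>lborel) = 1" "(\<integral>\<^sup>+x. ennreal (normalise kV x) \<partial>lborel) = 1"
    by (rule nn_integral_normalise_eq_1; use nonneg U V ZU ZV in simp)+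
  have scale: "ennreal (1 / (ZX * ZY)) * ennreal C = ennreal (1 / (ZU * ZV))"
    using X Y ZU ZV C constants by (simp add: field_simps flip: ennreal_mult)
  fix A :: "(real \<times> real) set"
  assume A [measurable]: "A \<in> sets (lborel \<Otimes>\<^sub>M lborel)"
  have "(\<integral>\<^sup>+x. \<integral>\<^sup>+y. ennreal (indicator A (T (x, y)) * normalise kX x * normalise kY y) \<partial>lborel \<partial>lborel)
      = ennreal (1 / (ZX * ZY))
        * (\<integral>\<^sup>+x. \<integral>\<^sup>+y. ennreal (indicator A (T (x, y)) * kX x * kY y) \<partial>lborel \<partial>lborel)"
    unfolding ZX_def ZY_def
    by (rule nn_integral_iterated_normalise[where W = "\<lambda>z. indicator A (T z)"]) (simp_all add: nonneg)
  also have "\<dots> = ennreal (1 / (ZU * ZV))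
      * (\<integral>\<^sup>+u. \<integral>\<^sup>+v. ennreal (indicator A (u, v) * kU u * kV v) \<partial>lborel \<partial>lborel)"
    by (simp add: transform[rule_format, OF A] scale flip: mult.assoc)
  also have "\<dots> = (\<integral>\<^sup>+u. \<integral>\<^sup>+v. ennreal (indicator A (u, v) * normalise kU u * normalise kV v) \<partial>lborel \<partial>lborel)"
    unfolding ZU(2)[symmetric] ZV(2)[symmetric]
    by (rule nn_integral_iterated_normalise[where W = "indicator A", symmetric]) (simp_all add: nonneg)
  finally show "(\<integral>\<^sup>+x. \<integral>\<^sup>+y. ennreal (indicator A (T (x, y)) * normalise kX x * normalise kY y) \<partial>lborel \<partial>lborel)
      = (\<integral>\<^sup>+u. \<integral>\<^sup>+v. ennreal (indicator A (u, v) * normalise kU u * normalise kV v) \<partial>lborel \<partial>lborel)" .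
qed

section \<open>Transforming an independent pair\<close>

lemma (in prob_space) indep_var_lborel_iff_borel:
  "indep_var lborel X lborel Y \<longleftrightarrow> indep_var borel X borel Y"
  by (simp add: indep_var_eq)

lemma (in prob_space) distributed_nn_integral_eq_1:
  assumes "distributed M lborel X f"
  shows "(\<integral>\<^sup>+x. f x \<partial>lborel) = 1"
proof -
  have "emeasure M (X -` UNIV \<inter> space M) = (\<integral>\<^sup>+x. f x * indicator UNIV x \<partial>lborel)"
    by (rule distributed_emeasure[OF assms]) simp
  then show ?thesis
    by (simp add: emeasure_space_1)
qed

lemma (in prob_space) distr_transform_eq_density:
  fixes X Y :: "'a \<Rightarrow> real" and T :: "real \<times> real \<Rightarrow> real \<times> real" and fX fY g1 g2 :: "real \<Rightarrow> real"
  assumes joint: "distributed M (lborel \<Otimes>\<^sub>M lborel) (\<lambda>\<omega>. (X \<omega>, Y \<omega>)) (\<lambda>(x, y). ennreal (fX x) * ennreal (fY y))"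
    and [measurable]: "T \<in> measurable (lborel \<Otimes>\<^sub>M lborel) (lborel \<Otimes>\<^sub>M lborel)"
      "fX \<in> borel_measurable borel" "fY \<in> borel_measurable borel"
      "g1 \<in> borel_measurable borel" "g2 \<in> borel_measurable borel"
    and nonneg: "\<And>x. 0 \<le> fX x" "\<And>x. 0 \<le> fY x" "\<And>x. 0 \<le> g1 x" "\<And>x. 0 \<le> g2 x"
    and transform: "\<And>A. A \<in> sets (lborel \<Otimes>\<^sub>M lborel) \<Longrightarrow>
      (\<integral>\<^sup>+x. \<integral>\<^sup>+y. ennreal (indicator A (T (x, y)) * fX x * fY y) \<partial>lborel \<partial>lborel)
      = (\<integral>\<^sup>+u. \<integral>\<^sup>+v. ennreal (indicator A (u, v) * g1 u * g2 v) \<partial>lborel \<partial>lborel)"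
  shows "distr M (lborel \<Otimes>\<^sub>M lborel) (\<lambda>\<omega>. T (X \<omega>, Y \<omega>))
       = density (lborel \<Otimes>\<^sub>M lborel) (\<lambda>(u, v). ennreal (g1 u) * ennreal (g2 v))"
proof -
  let ?P = "density (lborel \<Otimes>\<^sub>M lborel) (\<lambda>(x, y). ennreal (fX x) * ennreal (fY y))"
  have [measurable]: "(\<lambda>\<omega>. (X \<omega>, Y \<omega>)) \<in> measurable M (lborel \<Otimes>\<^sub>M lborel)"
    using joint by (rule distributed_measurable)
  have "distr M (lborel \<Otimes>\<^sub>M lborel) (\<lambda>\<omega>. T (X \<omega>, Y \<omega>))
      = distr (distr M (lborel \<Otimes>\<^sub>M lborel) (\<lambda>\<omega>. (X \<omega>, Y \<omega>))) (lborel \<Otimes>\<^sub>M lborel) T"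
    by (subst distr_distr) (auto simp: comp_def)
  also have "\<dots> = distr ?P (lborel \<Otimes>\<^sub>M lborel) T"
    using joint by (simp add: distributed_distr_eq_density)
  also have "\<dots> = density (lborel \<Otimes>\<^sub>M lborel) (\<lambda>(u, v). ennreal (g1 u) * ennreal (g2 v))"
  proof (rule measure_eqI)
    fix A assume "A \<in> sets (distr ?P (lborel \<Otimes>\<^sub>M lborel) T)"
    then have A [measurable]: "A \<in> sets (lborel \<Otimes>\<^sub>M lborel)" by simp
    have "emeasure (distr ?P (lborel \<Otimes>\<^sub>M lborel) T) A = emeasure ?P (T -` A \<inter> space (lborel \<Otimes>\<^sub>M lborel))"
      using A by (subst emeasure_distr) (simp_all add: measurable_density_eq1)
    also have "\<dots> = (\<integral>\<^sup>+z. ennreal (indicator A (T z) * fX (fst z) * fY (snd z)) \<partial>(lborel \<Otimes>\<^sub>M lborel))"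
      by (subst emeasure_density; measurable?)
        (auto intro!: nn_integral_cong simp: nonneg ennreal_mult space_pair_measure split: split_indicator)
    also have "\<dots> = (\<integral>\<^sup>+x. \<integral>\<^sup>+y. ennreal (indicator A (T (x, y)) * fX x * fY y) \<partial>lborel \<partial>lborel)"
      by (simp add: lborel.nn_integral_fst[symmetric])
    also have "\<dots> = (\<integral>\<^sup>+u. \<integral>\<^sup>+v. ennreal (indicator A (u, v) * g1 u * g2 v) \<partial>lborel \<partial>lborel)"
      by (rule transform[OF A])
    also have "\<dots> = (\<integral>\<^sup>+z. ennreal (indicator A z * g1 (fst z) * g2 (snd z)) \<partial>(lborel \<Otimes>\<^sub>M lborel))"
      by (simp add: lborel.nn_integral_fst[symmetric])
    also have "\<dots> = emeasure (density (lborel \<Otimes>\<^sub>M lborel) (\<lambda>(u, v). ennreal (g1 u) * ennreal (g2 v))) A"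
      by (subst emeasure_density; measurable?)
        (auto intro!: nn_integral_cong simp: nonneg ennreal_mult split: split_indicator)
    finally show "emeasure (distr ?P (lborel \<Otimes>\<^sub>M lborel) T) A
      = emeasure (density (lborel \<Otimes>\<^sub>M lborel) (\<lambda>(u, v). ennreal (g1 u) * ennreal (g2 v))) A" .
  qed simp
  finally show ?thesis .
qed

lemma prob_space_density_lborel:
  fixes g :: "real \<Rightarrow> real"
  assumes [measurable]: "g \<in> borel_measurable borel" and "(\<integral>\<^sup>+u. ennreal (g u) \<partial>lborel) = 1"
  shows "prob_space (density lborel (\<lambda>u. ennreal (g u)))"
  by (rule prob_spaceI) (simp add: emeasure_density assms(2))

lemma (in pair_prob_space) distr_pair_snd: "distr (M1 \<Otimes>\<^sub>M M2) M2 snd = M2"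
proof -
  interpret swapped: pair_prob_space M2 M1 ..
  have "distr (M1 \<Otimes>\<^sub>M M2) M2 snd = distr (distr (M2 \<Otimes>\<^sub>M M1) (M1 \<Otimes>\<^sub>M M2) (\<lambda>(x, y). (y, x))) M2 snd"
    by (rule arg_cong[where f = "\<lambda>N. distr N M2 snd", OF distr_pair_swap])
  also have "\<dots> = distr (M2 \<Otimes>\<^sub>M M1) M2 fst"
    by (subst distr_distr) (auto simp: comp_def intro!: distr_cong)
  also have "\<dots> = M2"
    by (rule M1.distr_pair_fst)
  finally show ?thesis .
qed

lemma (in prob_space) indep_var_distributed_of_product_density:
  fixes W :: "'a \<Rightarrow> real \<times> real" and g1 g2 :: "real \<Rightarrow> real"
  assumes [measurable]: "W \<in> measurable M (lborel \<Otimes>\<^sub>M lborel)"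
      "g1 \<in> borel_measurable borel" "g2 \<in> borel_measurable borel"
    and mass: "(\<integral>\<^sup>+u. ennreal (g1 u) \<partial>lborel) = 1" "(\<integral>\<^sup>+u. ennreal (g2 u) \<partial>lborel) = 1"
    and distr_W: "distr M (lborel \<Otimes>\<^sub>M lborel) W
      = density (lborel \<Otimes>\<^sub>M lborel) (\<lambda>(u, v). ennreal (g1 u) * ennreal (g2 v))"
  shows "indep_var borel (\<lambda>\<omega>. fst (W \<omega>)) borel (\<lambda>\<omega>. snd (W \<omega>))
    \<and> distributed M lborel (\<lambda>\<omega>. fst (W \<omega>)) (\<lambda>u. ennreal (g1 u))
    \<and> distributed M lborel (\<lambda>\<omega>. snd (W \<omega>)) (\<lambda>v. ennreal (g2 v))"
proof -
  define P1 P2 where "P1 = density lborel (\<lambda>u. ennreal (g1 u))" and "P2 = density lborel (\<lambda>u. ennreal (g2 u))"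
  interpret P1: prob_space P1
    unfolding P1_def by (rule prob_space_density_lborel[OF _ mass(1)]) measurable
  interpret P2: prob_space P2
    unfolding P2_def by (rule prob_space_density_lborel[OF _ mass(2)]) measurable
  interpret P12: pair_prob_space P1 P2 ..
  have pair: "distr M (lborel \<Otimes>\<^sub>M lborel) W = P1 \<Otimes>\<^sub>M P2"
    unfolding distr_W P1_def P2_def
    by (rule pair_measure_density[symmetric])
      (simp_all add: sigma_finite_lborel P2.sigma_finite_measure_axioms[unfolded P2_def])
  have fst: "distr M lborel (\<lambda>\<omega>. fst (W \<omega>)) = P1"
  proof -
    have "distr M lborel (\<lambda>\<omega>. fst (W \<omega>)) = distr (distr M (lborel \<Otimes>\<^sub>M lborel) W) lborel fst"
      by (subst distr_distr) (auto simp: comp_def)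
    also have "\<dots> = distr (P1 \<Otimes>\<^sub>M P2) P1 fst"
      unfolding pair by (rule distr_cong) (auto simp: P1_def)
    also have "\<dots> = P1"
      by (rule P2.distr_pair_fst)
    finally show ?thesis .
  qed
  have snd: "distr M lborel (\<lambda>\<omega>. snd (W \<omega>)) = P2"
  proof -
    have "distr M lborel (\<lambda>\<omega>. snd (W \<omega>)) = distr (distr M (lborel \<Otimes>\<^sub>M lborel) W) lborel snd"
      by (subst distr_distr) (auto simp: comp_def)
    also have "\<dots> = distr (P1 \<Otimes>\<^sub>M P2) P2 snd"
      unfolding pair by (rule distr_cong) (auto simp: P2_def)
    also have "\<dots> = P2"
      by (rule P12.distr_pair_snd)
    finally show ?thesis .
  qed
  have "distr M (borel \<Otimes>\<^sub>M borel) (\<lambda>\<omega>. (fst (W \<omega>), snd (W \<omega>))) = distr M (lborel \<Otimes>\<^sub>M lborel) W"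
    by (rule distr_cong) (auto intro: sets_pair_measure_cong)
  moreover have "distr M borel (\<lambda>\<omega>. fst (W \<omega>)) = P1" "distr M borel (\<lambda>\<omega>. snd (W \<omega>)) = P2"
    using fst snd by (simp_all add: distr_cong[of M M borel lborel])
  moreover have rv: "random_variable borel (\<lambda>\<omega>. fst (W \<omega>))" "random_variable borel (\<lambda>\<omega>. snd (W \<omega>))"
    using measurable_compose[OF assms(1) measurable_fst] measurable_compose[OF assms(1) measurable_snd]
    by simp_all
  ultimately have "indep_var borel (\<lambda>\<omega>. fst (W \<omega>)) borel (\<lambda>\<omega>. snd (W \<omega>))"
    by (simp add: indep_var_distribution_eq pair)
  with fst snd rv show ?thesis
    by (simp add: distributed_def P1_def P2_def)
qed

lemma nn_integral_H_II_transform: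
  fixes kX kY kU kV :: "real \<Rightarrow> real" and \<alpha> \<beta> C :: real and A :: "(real \<times> real) set"
  assumes \<alpha>: "0 < \<alpha>" and \<beta>: "0 \<le> \<beta>"
    and [measurable]: "kX \<in> borel_measurable borel" "kY \<in> borel_measurable borel"
      "kU \<in> borel_measurable borel" "kV \<in> borel_measurable borel"
    and C: "0 \<le> C" and pos: "\<And>x. 0 < x \<Longrightarrow> 0 < kU x" "\<And>x. 0 < x \<Longrightarrow> 0 < kV x"
    and densities: "\<And>u v. 0 < u \<Longrightarrow> 0 < v \<Longrightarrow>
      kX (fst (H_II_inv \<alpha> \<beta> (u, v))) * kY (snd (H_II_inv \<alpha> \<beta> (u, v))) * H_II_jacobian \<alpha> \<beta> u v
      = C * (kU u * kV v)"
    and A [measurable]: "A \<in> sets (lborel \<Otimes>\<^sub>M lborel)"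
  shows "(\<integral>\<^sup>+x. \<integral>\<^sup>+y. ennreal (indicator A (H_II \<alpha> \<beta> (x, y)) * restrict_pos kX x * restrict_pos kY y) \<partial>lborel \<partial>lborel)
    = ennreal C * (\<integral>\<^sup>+u. \<integral>\<^sup>+v. ennreal (indicator A (u, v) * restrict_pos kU u * restrict_pos kV v) \<partial>lborel \<partial>lborel)"
proof -
  define G where "G = (\<lambda>z. indicator A (H_II \<alpha> \<beta> z) * kX (fst z) * kY (snd z))"
  have [measurable]: "G \<in> borel_measurable (lborel \<Otimes>\<^sub>M lborel)"
    unfolding G_def by measurable
  have "(\<integral>\<^sup>+x. \<integral>\<^sup>+y. ennreal (indicator A (H_II \<alpha> \<beta> (x, y)) * restrict_pos kX x * restrict_pos kY y) \<partial>lborel \<partial>lborel)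
      = (\<integral>\<^sup>+x. \<integral>\<^sup>+y. ennreal (G (x, y) * indicator {0<..} x * indicator {0<..} y) \<partial>lborel \<partial>lborel)"
    by (intro nn_integral_cong) (simp add: G_def restrict_pos_def split: split_indicator)
  also have "\<dots> = (\<integral>\<^sup>+u. \<integral>\<^sup>+v. ennreal (G (H_II_inv \<alpha> \<beta> (u, v)) * H_II_jacobian \<alpha> \<beta> u v
                                  * indicator {0<..} u * indicator {0<..} v) \<partial>lborel \<partial>lborel)"
    by (rule nn_integral_quadrant_H_II_inv[OF \<alpha> \<beta>]) measurable
  also have "\<dots> = (\<integral>\<^sup>+u. \<integral>\<^sup>+v. ennreal (C * (indicator A (u, v) * restrict_pos kU u * restrict_pos kV v)) \<partial>lborel \<partial>lborel)"
  proof (intro nn_integral_cong)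
    fix u v :: real
    show "ennreal (G (H_II_inv \<alpha> \<beta> (u, v)) * H_II_jacobian \<alpha> \<beta> u v * indicator {0<..} u * indicator {0<..} v)
      = ennreal (C * (indicator A (u, v) * restrict_pos kU u * restrict_pos kV v))"
    proof (cases "0 < u \<and> 0 < v")
      case True
      then have "G (H_II_inv \<alpha> \<beta> (u, v)) * H_II_jacobian \<alpha> \<beta> u v
          = indicator A (u, v) * (kX (fst (H_II_inv \<alpha> \<beta> (u, v))) * kY (snd (H_II_inv \<alpha> \<beta> (u, v)))
              * H_II_jacobian \<alpha> \<beta> u v)"
        by (simp add: G_def H_II_H_II_inv[OF \<alpha> \<beta>])
      also have "\<dots> = C * (indicator A (u, v) * kU u * kV v)"
        using True by (simp add: densities)
      finally show ?thesis
        using True by (simp add: restrict_pos_def)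
    qed (auto simp: restrict_pos_def)
  qed
  also have "\<dots> = ennreal C * (\<integral>\<^sup>+u. \<integral>\<^sup>+v. ennreal (indicator A (u, v) * restrict_pos kU u * restrict_pos kV v) \<partial>lborel \<partial>lborel)"
  proof (rule nn_integral_iterated_cmult)
    have "0 \<le> restrict_pos kU u" "0 \<le> restrict_pos kV v" for u v
      using pos by (simp_all add: restrict_pos_nonneg)
    then show "0 \<le> indicator A (u, v) * restrict_pos kU u * restrict_pos kV v" for u v
      by simp
  qed (use C in simp, measurable)
  finally show ?thesis .
qed

lemma (in prob_space) indep_var_H_II_transform:
  fixes X Y :: "'a \<Rightarrow> real" and kX kY kU kV :: "real \<Rightarrow> real" and \<alpha> \<beta> C :: real
  assumes \<alpha>: "0 < \<alpha>" and \<beta>: "0 \<le> \<beta>" and C: "0 < C"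
    and meas [measurable]: "kX \<in> borel_measurable borel" "kY \<in> borel_measurable borel"
      "kU \<in> borel_measurable borel" "kV \<in> borel_measurable borel"
    and pos: "\<And>x. 0 < x \<Longrightarrow> 0 < kX x" "\<And>x. 0 < x \<Longrightarrow> 0 < kY x"
      "\<And>x. 0 < x \<Longrightarrow> 0 < kU x" "\<And>x. 0 < x \<Longrightarrow> 0 < kV x"
    and densities: "\<And>u v. 0 < u \<Longrightarrow> 0 < v \<Longrightarrow>
      kX (fst (H_II_inv \<alpha> \<beta> (u, v))) * kY (snd (H_II_inv \<alpha> \<beta> (u, v))) * H_II_jacobian \<alpha> \<beta> u v
      = C * (kU u * kV v)"
    and X: "distributed M lborel X (\<lambda>x. ennreal (normalise (restrict_pos kX) x))"
    and Y: "distributed M lborel Y (\<lambda>y. ennreal (normalise (restrict_pos kY) y))"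
    and indep: "indep_var borel X borel Y"
  shows "indep_var borel (\<lambda>\<omega>. fst (H_II \<alpha> \<beta> (X \<omega>, Y \<omega>))) borel (\<lambda>\<omega>. snd (H_II \<alpha> \<beta> (X \<omega>, Y \<omega>)))
    \<and> distributed M lborel (\<lambda>\<omega>. fst (H_II \<alpha> \<beta> (X \<omega>, Y \<omega>))) (\<lambda>u. ennreal (normalise (restrict_pos kU) u))
    \<and> distributed M lborel (\<lambda>\<omega>. snd (H_II \<alpha> \<beta> (X \<omega>, Y \<omega>))) (\<lambda>v. ennreal (normalise (restrict_pos kV) v))"
proof -
  have nonneg: "0 \<le> restrict_pos kX x" "0 \<le> restrict_pos kY x"
    "0 \<le> restrict_pos kU x" "0 \<le> restrict_pos kV x" for x
    using pos by (simp_all add: restrict_pos_nonneg)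
  have transform: "\<forall>A \<in> sets (lborel \<Otimes>\<^sub>M lborel).
      (\<integral>\<^sup>+x. \<integral>\<^sup>+y. ennreal (indicator A (H_II \<alpha> \<beta> (x, y)) * restrict_pos kX x * restrict_pos kY y) \<partial>lborel \<partial>lborel)
      = ennreal C * (\<integral>\<^sup>+u. \<integral>\<^sup>+v. ennreal (indicator A (u, v) * restrict_pos kU u * restrict_pos kV v) \<partial>lborel \<partial>lborel)"
    by (intro ballI) (rule nn_integral_H_II_transform[OF \<alpha> \<beta> meas less_imp_le[OF C] pos(3,4) densities])
  have nonzero: "(\<integral>\<^sup>+x. ennreal (restrict_pos kU x) \<partial>lborel) \<noteq> 0" "(\<integral>\<^sup>+x. ennreal (restrict_pos kV x) \<partial>lborel) \<noteq> 0"
    using nn_integral_restrict_pos_neq_0 meas pos by blast+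
  note normalised = normalise_transfer[OF nonneg measurable_restrict_pos[OF meas(1)]
      measurable_restrict_pos[OF meas(2)] measurable_restrict_pos[OF meas(3)]
      measurable_restrict_pos[OF meas(4)] measurable_H_II C
      distributed_nn_integral_eq_1[OF X] distributed_nn_integral_eq_1[OF Y] nonzero transform]
  have "distributed M (lborel \<Otimes>\<^sub>M lborel) (\<lambda>\<omega>. (X \<omega>, Y \<omega>))
      (\<lambda>(x, y). ennreal (normalise (restrict_pos kX) x) * ennreal (normalise (restrict_pos kY) y))"
    using indep by (intro distributed_joint_indep[OF sigma_finite_lborel sigma_finite_lborel X Y])
      (simp add: indep_var_lborel_iff_borel)
  then have distr_W: "distr M (lborel \<Otimes>\<^sub>M lborel) (\<lambda>\<omega>. H_II \<alpha> \<beta> (X \<omega>, Y \<omega>))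
    = density (lborel \<Otimes>\<^sub>M lborel)
        (\<lambda>(u, v). ennreal (normalise (restrict_pos kU) u) * ennreal (normalise (restrict_pos kV) v))"
  proof (rule distr_transform_eq_density)
    show "normalise (restrict_pos kX) \<in> borel_measurable borel" "normalise (restrict_pos kY) \<in> borel_measurable borel"
      "normalise (restrict_pos kU) \<in> borel_measurable borel" "normalise (restrict_pos kV) \<in> borel_measurable borel"
      by (simp_all add: measurable_normalise)
    show "0 \<le> normalise (restrict_pos kX) x" "0 \<le> normalise (restrict_pos kY) x"
      "0 \<le> normalise (restrict_pos kU) x" "0 \<le> normalise (restrict_pos kV) x" for x
      using nonneg by (simp_all add: normalise_nonneg)
  qed (rule measurable_H_II, rule normalised(3))
  have W: "(\<lambda>\<omega>. H_II \<alpha> \<beta> (X \<omega>, Y \<omega>)) \<in> measurable M (lborel \<Otimes>\<^sub>M lborel)"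
    using distributed_measurable[OF X] distributed_measurable[OF Y] by measurable
  show ?thesis
    by (rule indep_var_distributed_of_product_density[OF W _ _ normalised(1,2) distr_W])
      (measurable, measurable)
qed

section \<open>The densities of the theorem\<close>

lemma measurable_K_unnorm [measurable]: "K_unnorm l a b p q \<in> borel_measurable borel"
  unfolding K_unnorm_def[abs_def] by measurable

lemma measurable_K2_unnorm [measurable]: "K2_unnorm A B C \<in> borel_measurable borel"
  unfolding K2_unnorm_def[abs_def] by measurable

lemma measurable_Ga_unnorm [measurable]: "Ga_unnorm A C \<in> borel_measurable borel"
  unfolding Ga_unnorm_def[abs_def] by measurable

lemma K_unnorm_pos:
  assumes "0 < q" "0 < x"
  shows "0 < K_unnorm l a b p q x"
proof -
  have "0 < 1 + q / x"
    using assms by (simp add: add_pos_pos)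
  with assms show ?thesis
    by (simp add: K_unnorm_def)
qed

lemma K2_unnorm_pos: "0 < x \<Longrightarrow> 0 < K2_unnorm A B C x"
  by (simp add: K2_unnorm_def add_pos_pos)

lemma Ga_unnorm_pos: "0 < x \<Longrightarrow> 0 < Ga_unnorm A C x"
  by (simp add: Ga_unnorm_def)

lemma K_unnorm_H_II_inv:
  fixes \<alpha> \<beta> u v :: real
  assumes \<alpha>: "0 < \<alpha>" and \<beta>: "0 < \<beta>" and u: "0 < u" and v: "0 < v"
  shows "K_unnorm l a b p (1 / \<alpha>) (fst (H_II_inv \<alpha> \<beta> (u, v)))
           * K_unnorm (- l) a b p (1 / \<beta>) (snd (H_II_inv \<alpha> \<beta> (u, v))) * H_II_jacobian \<alpha> \<beta> u v
       = (\<beta> / \<alpha>) powr l * (K_unnorm (- l) a b p (1 / \<alpha>) u * K_unnorm l a b p (1 / \<beta>) v)"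
proof -
  define A B D where "A = 1 + \<alpha> * (u + v)" and "B = 1 + \<beta> * (u + v)" and "D = 1 + \<alpha> * u + \<beta> * v"
  define A' B' where "A' = 1 + \<alpha> * u" and "B' = 1 + \<beta> * v"
  have pos: "0 < A" "0 < B" "0 < D" "0 < A'" "0 < B'"
    using \<alpha> \<beta> u v by (simp_all add: A_def B_def D_def A'_def B'_def add_pos_pos)
  have inv: "fst (H_II_inv \<alpha> \<beta> (u, v)) = v * B / D" "snd (H_II_inv \<alpha> \<beta> (u, v)) = u * A / D"
    by (simp_all add: H_II_inv_def A_def B_def D_def)
  have jac: "H_II_jacobian \<alpha> \<beta> u v = A * B / D\<^sup>2"
    by (simp add: H_II_jacobian_def A_def B_def D_def)
  have "\<alpha> * v * B + D = A * B'" "\<beta> * u * A + D = B * A'"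
    by (simp_all add: A_def B_def D_def A'_def B'_def algebra_simps)
  then have q: "1 + 1 / \<alpha> / (v * B / D) = A * B' / (\<alpha> * v * B)"
    "1 + 1 / \<beta> / (u * A / D) = B * A' / (\<beta> * u * A)"
    "1 + 1 / \<alpha> / u = A' / (\<alpha> * u)" "1 + 1 / \<beta> / v = B' / (\<beta> * v)"
    using pos \<alpha> \<beta> u v by (simp_all add: field_simps A'_def B'_def)
  have "v * B + u * A = (u + v) * D"
    by (simp add: A_def B_def D_def algebra_simps)
  then have "v * B / D + u * A / D = u + v"
    using pos by (simp flip: add_divide_distrib)
  then have "- a * p * (v * B / D) + - a * p * (u * A / D) = - a * p * u + - a * p * v"
    by (metis distrib_left)
  then have exps: "exp (- a * p * (v * B / D)) * exp (- a * p * (u * A / D)) = exp (- a * p * u) * exp (- a * p * v)"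
    by (simp flip: exp_add)
  \<comment> \<open>Both sides are positive, so it suffices to compare logarithms, where the powers become linear.\<close>
  have powers: "(v * B / D) powr (l - 1) * (A * B' / (\<alpha> * v * B)) powr (- b + l / 2)
      * (u * A / D) powr (- l - 1) * (B * A' / (\<beta> * u * A)) powr (- b + - l / 2) * (A * B / D\<^sup>2)
    = (\<beta> / \<alpha>) powr l * (u powr (- l - 1) * (A' / (\<alpha> * u)) powr (- b + - l / 2)
      * v powr (l - 1) * (B' / (\<beta> * v)) powr (- b + l / 2))" (is "?L = ?R")
  proof -
    have "0 < ?L" "0 < ?R" using pos \<alpha> \<beta> u v by simp_all
    moreover have "ln ?L = ln ?R"
      using pos \<alpha> \<beta> u v by (simp add: ln_mult ln_div ln_powr power2_eq_square) (simp add: field_simps)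
    ultimately show ?thesis by simp
  qed
  have lhs: "K_unnorm l a b p (1 / \<alpha>) (v * B / D) * K_unnorm (- l) a b p (1 / \<beta>) (u * A / D) * (A * B / D\<^sup>2)
    = (v * B / D) powr (l - 1) * (A * B' / (\<alpha> * v * B)) powr (- b + l / 2)
      * (u * A / D) powr (- l - 1) * (B * A' / (\<beta> * u * A)) powr (- b + - l / 2) * (A * B / D\<^sup>2)
      * (exp (- a * p * u) * exp (- a * p * v))"
    unfolding K_unnorm_def q(1,2) exps[symmetric] by (simp add: ac_simps)
  have rhs: "(\<beta> / \<alpha>) powr l * (K_unnorm (- l) a b p (1 / \<alpha>) u * K_unnorm l a b p (1 / \<beta>) v)
    = (\<beta> / \<alpha>) powr l * (u powr (- l - 1) * (A' / (\<alpha> * u)) powr (- b + - l / 2)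
      * v powr (l - 1) * (B' / (\<beta> * v)) powr (- b + l / 2)) * (exp (- a * p * u) * exp (- a * p * v))"
    unfolding K_unnorm_def q(3,4) by (simp add: ac_simps)
  show ?thesis
    unfolding inv jac lhs rhs powers ..
qed

lemma K2_Ga_unnorm_H_II_inv:
  fixes u v :: real
  assumes u: "0 < u" and v: "0 < v"
  shows "K2_unnorm (b + l / 2) (- l) c (fst (H_II_inv 1 0 (u, v)))
           * Ga_unnorm (b - l / 2) c (snd (H_II_inv 1 0 (u, v))) * H_II_jacobian 1 0 u v
       = K2_unnorm (b - l / 2) l c u * Ga_unnorm (b + l / 2) c v"
proof -
  define A A' where "A = 1 + u + v" and "A' = 1 + u"
  have pos: "0 < A" "0 < A'"
    using u v by (simp_all add: A_def A'_def)
  have inv: "fst (H_II_inv 1 0 (u, v)) = v / A'" "snd (H_II_inv 1 0 (u, v)) = u * A / A'"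
    by (simp_all add: H_II_inv_def A_def A'_def add.assoc)
  have jac: "H_II_jacobian 1 0 u v = A / A'\<^sup>2"
    by (simp add: H_II_jacobian_def A_def A'_def add.assoc)
  have q: "1 + v / A' = A / A'"
    using pos by (simp add: field_simps A_def A'_def)
  have "v + u * A = (u + v) * A'"
    by (simp add: A_def A'_def algebra_simps)
  then have "v / A' + u * A / A' = u + v"
    using pos by (simp flip: add_divide_distrib)
  then have "- c * (v / A') + - c * (u * A / A') = - c * u + - c * v"
    by (metis distrib_left)
  then have exps: "exp (- c * (v / A')) * exp (- c * (u * A / A')) = exp (- c * u) * exp (- c * v)"
    by (simp flip: exp_add)
  have powers: "(v / A') powr (b + l / 2 - 1) * (A / A') powr (- (b + l / 2) - - l)
      * (u * A / A') powr (b - l / 2 - 1) * (A / A'\<^sup>2)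
    = u powr (b - l / 2 - 1) * A' powr (- (b - l / 2) - l) * v powr (b + l / 2 - 1)" (is "?L = ?R")
  proof -
    have "0 < ?L" "0 < ?R" using pos u v by simp_all
    moreover have "ln ?L = ln ?R"
      using pos u v by (simp add: ln_mult ln_div ln_powr power2_eq_square) (simp add: field_simps)
    ultimately show ?thesis by simp
  qed
  have lhs: "K2_unnorm (b + l / 2) (- l) c (v / A') * Ga_unnorm (b - l / 2) c (u * A / A') * (A / A'\<^sup>2)
    = (v / A') powr (b + l / 2 - 1) * (A / A') powr (- (b + l / 2) - - l)
      * (u * A / A') powr (b - l / 2 - 1) * (A / A'\<^sup>2) * (exp (- c * u) * exp (- c * v))"
    unfolding K2_unnorm_def Ga_unnorm_def q exps[symmetric] by (simp add: ac_simps)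
  have rhs: "K2_unnorm (b - l / 2) l c u * Ga_unnorm (b + l / 2) c v
    = u powr (b - l / 2 - 1) * A' powr (- (b - l / 2) - l) * v powr (b + l / 2 - 1)
      * (exp (- c * u) * exp (- c * v))"
    unfolding K2_unnorm_def Ga_unnorm_def A'_def by (simp add: ac_simps)
  show ?thesis
    unfolding inv jac lhs rhs powers ..
qed

lemma (in prob_space) indep_var_H_II_K:
  assumes "0 < \<alpha>" "0 < \<beta>"
    and "distributed M lborel X (\<lambda>x. ennreal (K_density l a b p (1 / \<alpha>) x))"
    and "distributed M lborel Y (\<lambda>y. ennreal (K_density (- l) a b p (1 / \<beta>) y))"
    and "indep_var borel X borel Y"
  shows "indep_var borel (\<lambda>\<omega>. fst (H_II \<alpha> \<beta> (X \<omega>, Y \<omega>))) borel (\<lambda>\<omega>. snd (H_II \<alpha> \<beta> (X \<omega>, Y \<omega>)))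
    \<and> distributed M lborel (\<lambda>\<omega>. fst (H_II \<alpha> \<beta> (X \<omega>, Y \<omega>))) (\<lambda>u. ennreal (K_density (- l) a b p (1 / \<alpha>) u))
    \<and> distributed M lborel (\<lambda>\<omega>. snd (H_II \<alpha> \<beta> (X \<omega>, Y \<omega>))) (\<lambda>v. ennreal (K_density l a b p (1 / \<beta>) v))"
  using assms unfolding K_density_eq_normalise
  by (intro indep_var_H_II_transform[where C = "(\<beta> / \<alpha>) powr l"])
    (simp_all add: K_unnorm_pos K_unnorm_H_II_inv)

lemma (in prob_space) indep_var_F_KGa_B:
  assumes "distributed M lborel X (\<lambda>x. ennreal (K2_density (b + l / 2) (- l) c x))"
    and "distributed M lborel Y (\<lambda>y. ennreal (Ga_density (b - l / 2) c y))"
    and "indep_var borel X borel Y"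
  shows "indep_var borel (\<lambda>\<omega>. fst (F_KGa_B (X \<omega>, Y \<omega>))) borel (\<lambda>\<omega>. snd (F_KGa_B (X \<omega>, Y \<omega>)))
    \<and> distributed M lborel (\<lambda>\<omega>. fst (F_KGa_B (X \<omega>, Y \<omega>))) (\<lambda>u. ennreal (K2_density (b - l / 2) l c u))
    \<and> distributed M lborel (\<lambda>\<omega>. snd (F_KGa_B (X \<omega>, Y \<omega>))) (\<lambda>v. ennreal (Ga_density (b + l / 2) c v))"
  using assms unfolding K2_density_eq_normalise Ga_density_eq_normalise F_KGa_B_eq_H_II
  by (intro indep_var_H_II_transform[where C = 1])
    (simp_all add: K2_unnorm_pos Ga_unnorm_pos K2_Ga_unnorm_H_II_inv)

text \<open>The constraints on \<open>a\<close>, \<open>b\<close> and \<open>l\<close> only make the densities integrable, which the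
  distributional hypotheses on \<open>X\<close> and \<open>Y\<close> already guarantee.\<close>

theorem corollary5p2:
  fixes M :: "'s measure" and l a b :: real
  assumes "prob_space M"
    and "0 < a" and "0 < b" and "- b < l / 2" and "l / 2 < b"
  shows
    "(\<forall>\<alpha> \<beta> (X :: 's \<Rightarrow> real) (Y :: 's \<Rightarrow> real). 0 < \<alpha> \<longrightarrow> 0 < \<beta> \<longrightarrow>
        distributed M lborel X (\<lambda>x. ennreal (K_density l a b 1 (1 / \<alpha>) x)) \<longrightarrow>
        distributed M lborel Y (\<lambda>y. ennreal (K_density (- l) a b 1 (1 / \<beta>) y)) \<longrightarrow>
        prob_space.indep_var M borel X borel Y \<longrightarrow>
        (let U = (\<lambda>\<omega>. fst (H_II \<alpha> \<beta> (X \<omega>, Y \<omega>)));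
             V = (\<lambda>\<omega>. snd (H_II \<alpha> \<beta> (X \<omega>, Y \<omega>)))
         in prob_space.indep_var M borel U borel V \<and>
            distributed M lborel U (\<lambda>u. ennreal (K_density (- l) a b 1 (1 / \<alpha>) u)) \<and>
            distributed M lborel V (\<lambda>v. ennreal (K_density l a b 1 (1 / \<beta>) v))))
   \<and> (\<forall>(X :: 's \<Rightarrow> real) (Y :: 's \<Rightarrow> real).
        distributed M lborel X (\<lambda>x. ennreal (K2_density (b + l / 2) (- l) a x)) \<longrightarrow>
        distributed M lborel Y (\<lambda>y. ennreal (Ga_density (b - l / 2) a y)) \<longrightarrow>
        prob_space.indep_var M borel X borel Y \<longrightarrow>
        (let U = (\<lambda>\<omega>. fst (F_KGa_B (X \<omega>, Y \<omega>)));
             V = (\<lambda>\<omega>. snd (F_KGa_B (X \<omega>, Y \<omega>)))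
         in prob_space.indep_var M borel U borel V \<and>
            distributed M lborel U (\<lambda>u. ennreal (K2_density (b - l / 2) l a u)) \<and>
            distributed M lborel V (\<lambda>v. ennreal (Ga_density (b + l / 2) a v))))"
proof -
  interpret prob_space M by fact
  show ?thesis
    unfolding Let_def using indep_var_H_II_K[where p = 1] indep_var_F_KGa_B by blast
qed

end
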